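(* For every $n\geqslant 2$, $|\mathcal{AO}_n|=\binom{2n}{n}-\left\lfloor\frac{1}{2}n^2\right\rfloor$.
   Context: Let $\Omega_n=\{1<2<\cdots<n\}$. $\mathcal{I}_n$ denotes the symmetric inverse monoid of all partial injective maps of $\Omega_n$. $\mathcal{AI}_n$ is the set of all $\alpha\in\mathcal{I}_n$ such that $\alpha=\sigma|_{\mathrm{Dom}(\alpha)}$ for some even permutation $\sigma$ of $\Omega_n$. $\mathcal{POI}_n$ is the set of order-preserving elements of $\mathcal{I}_n$, and $\mathcal{AO}_n=\mathcal{AI}_n\cap\mathcal{POI}_n$. *)

theory Defs
  imports Complex_Main "HOL-Combinatorics.Permutations"
begin

definition partial_injections :: "nat \<Rightarrow> (nat \<rightharpoonup> nat) set"  ("\<I>") where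
  "partial_injections n = {\<alpha>. dom \<alpha> \<subseteq> {1..n} \<and> ran \<alpha> \<subseteq> {1..n} \<and> inj_on \<alpha> (dom \<alpha>)}"

definition AI :: "nat \<Rightarrow> (nat \<rightharpoonup> nat) set" where
  "AI n = {\<alpha> \<in> partial_injections n. \<exists>\<sigma>. \<sigma> permutes {1..n} \<and> evenperm \<sigma> \<and>
            (\<forall>x\<in>dom \<alpha>. \<alpha> x = Some (\<sigma> x))}"

definition POI :: "nat \<Rightarrow> (nat \<rightharpoonup> nat) set" where
  "POI n = {\<alpha> \<in> partial_injections n. \<forall>x\<in>dom \<alpha>. \<forall>y\<in>dom \<alpha>. x \<le> y \<longrightarrow> the (\<alpha> x) \<le> the (\<alpha> y)}"

definition AO :: "nat \<Rightarrow> (nat \<rightharpoonup> nat) set" where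
  "AO n = AI n \<inter> POI n"

end

theory Submission
  imports Defs
begin

(* An order-preserving partial injection is determined by its domain and range, and these can be
   any two subsets of {1..n} of equal size; by Vandermonde's identity there are (2n choose n) such
   pairs. Such a map is the restriction of an even permutation except in one situation. If two
   points lie outside the domain, an odd extension is corrected by the transposition of these two
   points; if the domain is everything, the map is the identity. If the domain misses exactly i and
   the range misses exactly j, the only extension is the cycle carrying i to j and shifting the
   points in between by one, whose sign is (-1)^(i+j). Hence the maps to discard correspond to the
   pairs (i, j) with i + j odd, and there are floor(n^2/2) of them. *)

section \<open>Order-preserving partial injections\<close>

lemma map_sorted_list_of_set_strict_mono_on:
  fixes f :: "'a::linorder \<Rightarrow> 'b::linorder"
  assumes "finite A" and "strict_mono_on A f"
  shows "map f (sorted_list_of_set A) = sorted_list_of_set (f ` A)"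
proof (rule strict_sorted_equal)
  show "sorted_wrt (<) (map f (sorted_list_of_set A))"
    unfolding sorted_wrt_map
    by (rule sorted_wrt_mono_rel[OF _ strict_sorted_list_of_set])
      (use assms in \<open>auto dest: strict_mono_onD\<close>)
qed (use assms in auto)

lemma strict_mono_on_eq_if_image_eq:
  fixes f g :: "'a::linorder \<Rightarrow> 'b::linorder"
  assumes "finite A" "strict_mono_on A f" "strict_mono_on A g" "f ` A = g ` A" "x \<in> A"
  shows "f x = g x"
proof -
  have "map f (sorted_list_of_set A) = map g (sorted_list_of_set A)"
    using assms(1-4) by (simp add: map_sorted_list_of_set_strict_mono_on)
  then show ?thesis
    using assms(1,5) by (simp add: map_eq_conv)
qed

lemma ran_eq_image_dom: "ran \<alpha> = (the \<circ> \<alpha>) ` dom \<alpha>"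
  by (force simp: ran_def dom_def)

lemma inj_on_the_comp_iff: "inj_on (the \<circ> \<alpha>) (dom \<alpha>) \<longleftrightarrow> inj_on \<alpha> (dom \<alpha>)"
  by (auto simp: inj_on_def dom_def)

lemma card_ran_eq_card_dom: "inj_on \<alpha> (dom \<alpha>) \<Longrightarrow> card (ran \<alpha>) = card (dom \<alpha>)"
  unfolding ran_eq_image_dom by (metis card_image inj_on_the_comp_iff)

lemma partial_injectionsD:
  assumes "\<alpha> \<in> \<I> n"
  shows "dom \<alpha> \<subseteq> {1..n}" "ran \<alpha> \<subseteq> {1..n}" "inj_on \<alpha> (dom \<alpha>)"
    "finite (dom \<alpha>)" "card (ran \<alpha>) = card (dom \<alpha>)"
  using assms finite_subset[of "dom \<alpha>" "{1..n}"] card_ran_eq_card_dom[of \<alpha>]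
  by (auto simp: partial_injections_def)

lemma POI_subset: "POI n \<subseteq> \<I> n"
  by (auto simp: POI_def)

lemma POI_strict_mono_on:
  assumes "\<alpha> \<in> POI n"
  shows "strict_mono_on (dom \<alpha>) (the \<circ> \<alpha>)"
proof (rule strict_mono_onI)
  fix x y assume "x \<in> dom \<alpha>" "y \<in> dom \<alpha>" "x < y"
  moreover have "inj_on \<alpha> (dom \<alpha>)"
    using assms by (simp add: POI_def partial_injections_def)
  ultimately show "(the \<circ> \<alpha>) x < (the \<circ> \<alpha>) y"
    using assms by (force simp: POI_def dom_def inj_on_def le_less)
qed

lemma POI_eqI:
  assumes "\<alpha> \<in> POI n" "\<beta> \<in> POI n" "dom \<alpha> = dom \<beta>" "ran \<alpha> = ran \<beta>"
  shows "\<alpha> = \<beta>"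
proof (rule ext, rule option.expand)
  fix x
  show "\<alpha> x = None \<longleftrightarrow> \<beta> x = None"
    using assms(3) by (metis domIff)
  assume "\<alpha> x \<noteq> None"
  then have "x \<in> dom \<alpha>" by blast
  moreover have "finite (dom \<alpha>)"
    using assms(1) POI_subset partial_injectionsD(4) by blast
  moreover have "strict_mono_on (dom \<alpha>) (the \<circ> \<alpha>)" "strict_mono_on (dom \<alpha>) (the \<circ> \<beta>)"
    using POI_strict_mono_on[OF assms(1)] POI_strict_mono_on[OF assms(2)] assms(3) by simp_all
  moreover have "(the \<circ> \<alpha>) ` dom \<alpha> = (the \<circ> \<beta>) ` dom \<alpha>"
    using assms(3,4) by (simp add: ran_eq_image_dom)
  ultimately show "the (\<alpha> x) = the (\<beta> x)"
    using strict_mono_on_eq_if_image_eq by (metis comp_apply)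
qed

lemma POI_iff:
  "\<alpha> \<in> POI n \<longleftrightarrow> dom \<alpha> \<subseteq> {1..n} \<and> ran \<alpha> \<subseteq> {1..n} \<and> strict_mono_on (dom \<alpha>) (the \<circ> \<alpha>)"
proof
  assume "\<alpha> \<in> POI n"
  moreover from this have "\<alpha> \<in> \<I> n"
    using POI_subset by blast
  ultimately show "dom \<alpha> \<subseteq> {1..n} \<and> ran \<alpha> \<subseteq> {1..n} \<and> strict_mono_on (dom \<alpha>) (the \<circ> \<alpha>)"
    using partial_injectionsD(1,2) POI_strict_mono_on by simp
next
  assume *: "dom \<alpha> \<subseteq> {1..n} \<and> ran \<alpha> \<subseteq> {1..n} \<and> strict_mono_on (dom \<alpha>) (the \<circ> \<alpha>)"
  then have "inj_on (the \<circ> \<alpha>) (dom \<alpha>)"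
    using strict_mono_on_imp_inj_on by blast
  then have "inj_on \<alpha> (dom \<alpha>)"
    by (simp add: inj_on_the_comp_iff)
  moreover have "the (\<alpha> x) \<le> the (\<alpha> y)" if "x \<in> dom \<alpha>" "y \<in> dom \<alpha>" "x \<le> y" for x y
    using * that strict_mono_onD[of "dom \<alpha>" "the \<circ> \<alpha>" x y] by (cases "x = y") (auto simp: le_less)
  ultimately show "\<alpha> \<in> POI n"
    using * by (simp add: POI_def partial_injections_def)
qed

lemma POI_exists:
  assumes "A \<subseteq> {1..n}" "B \<subseteq> {1..n}" "card A = card B"
  obtains \<alpha> where "\<alpha> \<in> POI n" "dom \<alpha> = A" "ran \<alpha> = B"
proof
  define xs where "xs = sorted_list_of_set A"
  define ys where "ys = sorted_list_of_set B"
  have len: "length xs = length ys"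
    using assms(3) by (simp add: xs_def ys_def)
  have "finite A" "finite B"
    using assms(1,2) finite_subset by auto
  then have set: "set xs = A" "set ys = B"
    by (simp_all add: xs_def ys_def)
  have "sorted_wrt (<) xs" "sorted_wrt (<) ys"
    by (simp_all add: xs_def ys_def strict_sorted_list_of_set)
  then have mono: "strict_mono_on {..<length xs} ((!) xs)" "strict_mono_on {..<length xs} ((!) ys)"
    using len by (auto intro!: strict_mono_onI sorted_wrt_nth_less)
  define \<alpha> where "\<alpha> = map_of (zip xs ys)"
  show dom: "dom \<alpha> = A"
    using len set by (simp add: \<alpha>_def)
  show ran: "ran \<alpha> = B"
    using len set by (simp add: \<alpha>_def ran_map_of_zip xs_def)
  have nth: "\<alpha> (xs ! k) = Some (ys ! k)" if "k < length xs" for k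
    using map_of_zip_nth[OF len] that len by (simp add: \<alpha>_def xs_def)
  have "strict_mono_on A (the \<circ> \<alpha>)"
  proof (rule strict_mono_onI)
    fix x y assume "x \<in> A" "y \<in> A" "x < y"
    then obtain i k where ik: "i < length xs" "k < length xs" "x = xs ! i" "y = xs ! k"
      using set by (metis in_set_conv_nth)
    with \<open>x < y\<close> have "i < k"
      using strict_mono_on_less[OF mono(1)] by simp
    then show "(the \<circ> \<alpha>) x < (the \<circ> \<alpha>) y"
      using strict_mono_onD[OF mono(2)] ik nth by simp
  qed
  then show "\<alpha> \<in> POI n"
    using assms dom ran by (simp add: POI_iff)
qed

definition equicardinal_subset_pairs :: "'a set \<Rightarrow> ('a set \<times> 'a set) set" where
  "equicardinal_subset_pairs S = {(A, B). A \<subseteq> S \<and> B \<subseteq> S \<and> card A = card B}"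

lemma finite_equicardinal_subset_pairs:
  "finite S \<Longrightarrow> finite (equicardinal_subset_pairs S)"
  by (rule finite_subset[of _ "Pow S \<times> Pow S"]) (auto simp: equicardinal_subset_pairs_def)

lemma card_equicardinal_subset_pairs:
  assumes "finite S"
  shows "card (equicardinal_subset_pairs S) = (2 * card S) choose card S"
proof -
  define subsets where "subsets k = {A. A \<subseteq> S \<and> card A = k}" for k
  have "equicardinal_subset_pairs S = (\<Union>k\<le>card S. subsets k \<times> subsets k)"
    using assms by (auto simp: equicardinal_subset_pairs_def subsets_def card_mono)
  moreover have "finite (subsets k)" for k
    using assms by (auto simp: subsets_def intro: finite_subset[of _ "Pow S"])
  ultimately have "card (equicardinal_subset_pairs S) = (\<Sum>k\<le>card S. card (subsets k \<times> subsets k))"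
    by (simp only:) (rule card_UN_disjoint, auto simp: subsets_def)
  also have "\<dots> = (\<Sum>k\<le>card S. (card S choose k) ^ 2)"
    using assms by (simp add: subsets_def n_subsets card_cartesian_product power2_eq_square)
  also have "\<dots> = (2 * card S) choose card S"
    by (rule choose_square_sum)
  finally show ?thesis .
qed

lemma bij_betw_POI_dom_ran:
  "bij_betw (\<lambda>\<alpha>. (dom \<alpha>, ran \<alpha>)) (POI n) (equicardinal_subset_pairs {1..n})"
proof (rule bij_betw_imageI)
  show "inj_on (\<lambda>\<alpha>. (dom \<alpha>, ran \<alpha>)) (POI n)"
    by (rule inj_onI) (intro POI_eqI, auto)
  show "(\<lambda>\<alpha>. (dom \<alpha>, ran \<alpha>)) ` POI n = equicardinal_subset_pairs {1..n}"
  proof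
    show "(\<lambda>\<alpha>. (dom \<alpha>, ran \<alpha>)) ` POI n \<subseteq> equicardinal_subset_pairs {1..n}"
    proof (rule image_subsetI)
      fix \<alpha> assume "\<alpha> \<in> POI n"
      then have "\<alpha> \<in> \<I> n"
        using POI_subset by blast
      then show "(dom \<alpha>, ran \<alpha>) \<in> equicardinal_subset_pairs {1..n}"
        using partial_injectionsD(1,2,5) by (simp add: equicardinal_subset_pairs_def)
    qed
  next
    show "equicardinal_subset_pairs {1..n} \<subseteq> (\<lambda>\<alpha>. (dom \<alpha>, ran \<alpha>)) ` POI n"
    proof
      fix p assume "p \<in> equicardinal_subset_pairs {1..n}"
      then obtain A B where "p = (A, B)" "A \<subseteq> {1..n}" "B \<subseteq> {1..n}" "card A = card B"
        by (auto simp: equicardinal_subset_pairs_def)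
      moreover from this obtain \<alpha> where "\<alpha> \<in> POI n" "dom \<alpha> = A" "ran \<alpha> = B"
        using POI_exists by blast
      ultimately show "p \<in> (\<lambda>\<alpha>. (dom \<alpha>, ran \<alpha>)) ` POI n"
        by blast
    qed
  qed
qed

section \<open>Extending partial injections to permutations\<close>

lemma permutes_extension_of_inj_on:
  assumes "finite S" "A \<subseteq> S" "f ` A \<subseteq> S" "inj_on f A"
  obtains \<sigma> where "\<sigma> permutes S" "\<And>x. x \<in> A \<Longrightarrow> \<sigma> x = f x"
proof -
  have "card (S - A) = card (S - f ` A)"
    using assms by (simp add: card_Diff_subset card_image finite_subset)
  then obtain h where h: "bij_betw h (S - A) (S - f ` A)"
    using assms(1) finite_same_card_bij by blast
  define \<sigma> where "\<sigma> x = (if x \<in> A then f x else if x \<in> S then h x else x)" for x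
  have "bij_betw \<sigma> A (f ` A)"
    using assms(4) by (simp add: bij_betw_imageI inj_on_def \<sigma>_def)
  moreover have "bij_betw \<sigma> (S - A) (S - f ` A)"
    using h by (rule bij_betw_cong[THEN iffD1, rotated]) (simp add: \<sigma>_def)
  ultimately have "bij_betw \<sigma> (A \<union> (S - A)) (f ` A \<union> (S - f ` A))"
    by (rule bij_betw_combine) blast
  then have "bij_betw \<sigma> S S"
    using assms(2,3) by (simp add: Un_absorb1 Un_Diff_cancel)
  then have "\<sigma> permutes S"
    by (rule bij_imp_permutes) (use assms(2) in \<open>auto simp: \<sigma>_def\<close>)
  then show thesis
    by (rule that) (simp add: \<sigma>_def)
qed

lemma permutes_even_extension_of_inj_on:
  assumes "finite S" "A \<subseteq> S" "f ` A \<subseteq> S" "inj_on f A"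
    and "a \<in> S - A" "b \<in> S - A" "a \<noteq> b"
  obtains \<sigma> where "\<sigma> permutes S" "evenperm \<sigma>" "\<And>x. x \<in> A \<Longrightarrow> \<sigma> x = f x"
proof -
  obtain \<sigma> where \<sigma>: "\<sigma> permutes S" "\<And>x. x \<in> A \<Longrightarrow> \<sigma> x = f x"
    using permutes_extension_of_inj_on[OF assms(1-4)] by blast
  show thesis
  proof (cases "evenperm \<sigma>")
    case True
    then show thesis
      using \<sigma> that by blast
  next
    case False
    have "\<sigma> \<circ> transpose a b permutes S"
      using \<sigma>(1) assms(5,6) by (simp add: permutes_compose permutes_swap_id)
    moreover have "evenperm (\<sigma> \<circ> transpose a b)"
    proof -
      have "permutation \<sigma>"
        using \<sigma>(1) assms(1) permutation_permutes by blast
      then show ?thesis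
        using False assms(7) by (simp add: evenperm_comp permutation_swap_id evenperm_swap)
    qed
    moreover have "(\<sigma> \<circ> transpose a b) x = f x" if "x \<in> A" for x
      using that assms(5,6) \<sigma>(2) by (auto simp: transpose_def)
    ultimately show thesis
      by (rule that)
  qed
qed

lemma bij_eq_if_eq_off_point:
  assumes "bij \<sigma>" "bij \<tau>" "\<And>x. x \<noteq> a \<Longrightarrow> \<sigma> x = \<tau> x"
  shows "\<sigma> = \<tau>"
proof
  fix x
  obtain y where y: "\<tau> y = \<sigma> a"
    using assms(2) by (metis bij_pointE)
  have "y = a"
    using y assms by (metis bij_pointE)
  then show "\<sigma> x = \<tau> x"
    using y assms(3) by (cases "x = a") auto
qed

section \<open>Cycles of consecutive points\<close>

(* For i <= j this is the cycle (j j-1 ... i), for j < i the cycle (j j+1 ... i). It sends i to j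
   and is increasing on all other points. *)
definition shift_cycle :: "nat \<Rightarrow> nat \<Rightarrow> nat \<Rightarrow> nat" where
  "shift_cycle i j x =
    (if i \<le> j then (if x < i \<or> j < x then x else if x = i then j else x - 1)
     else (if x < j \<or> i < x then x else if x = i then j else x + 1))"

lemma shift_cycle_self: "shift_cycle i i = id"
  by (auto simp: fun_eq_iff shift_cycle_def)

lemma shift_cycle_apply_self: "shift_cycle i j i = j"
  by (simp add: shift_cycle_def)

lemma shift_cycle_Suc_right:
  "i \<le> j \<Longrightarrow> shift_cycle i (Suc j) = transpose j (Suc j) \<circ> shift_cycle i j"
  by (auto simp: fun_eq_iff shift_cycle_def transpose_def)

lemma shift_cycle_Suc_left:
  "j \<le> i \<Longrightarrow> shift_cycle (Suc i) j = shift_cycle i j \<circ> transpose i (Suc i)"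
  by (auto simp: fun_eq_iff shift_cycle_def transpose_def)

lemma shift_cycle_parity:
  "permutation (shift_cycle i j) \<and> (evenperm (shift_cycle i j) \<longleftrightarrow> even (i + j))"
proof (cases "i \<le> j")
  case True
  then show ?thesis
  proof (induction j rule: dec_induct)
    case (step k)
    have "permutation (transpose k (Suc k))" "\<not> evenperm (transpose k (Suc k))"
      by (simp_all add: permutation_swap_id evenperm_swap)
    with step.IH have "permutation (transpose k (Suc k) \<circ> shift_cycle i k) \<and>
        (evenperm (transpose k (Suc k) \<circ> shift_cycle i k) \<longleftrightarrow> even (i + Suc k))"
      by (simp add: permutation_compose evenperm_comp)
    then show ?case
      by (simp only: shift_cycle_Suc_right[OF step.hyps(1)])
  qed (simp add: shift_cycle_self)
next
  case False
  then have "j \<le> i"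
    by simp
  then show ?thesis
  proof (induction i rule: dec_induct)
    case (step k)
    have "permutation (transpose k (Suc k))" "\<not> evenperm (transpose k (Suc k))"
      by (simp_all add: permutation_swap_id evenperm_swap)
    with step.IH have "permutation (shift_cycle k j \<circ> transpose k (Suc k)) \<and>
        (evenperm (shift_cycle k j \<circ> transpose k (Suc k)) \<longleftrightarrow> even (Suc k + j))"
      by (simp add: permutation_compose evenperm_comp)
    then show ?case
      by (simp only: shift_cycle_Suc_left[OF step.hyps(1)])
  qed (simp add: shift_cycle_self)
qed

lemma shift_cycle_permutes:
  assumes "i \<in> {m..n}" "j \<in> {m..n}"
  shows "shift_cycle i j permutes {m..n}"
proof -
  have "bij (shift_cycle i j)"
    using shift_cycle_parity permutation_bijective by blast
  moreover have "shift_cycle i j x = x" if "x \<notin> {m..n}" for x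
    using assms that by (auto simp: shift_cycle_def)
  ultimately show ?thesis
    unfolding permutes_def by (metis bij_pointE)
qed

lemma shift_cycle_strict_mono_on: "strict_mono_on (- {i}) (shift_cycle i j)"
  by (rule strict_mono_onI) (auto simp: shift_cycle_def)

section \<open>Order-preserving restrictions of even permutations\<close>

lemma partial_injection_in_AI_if_two_points_outside_dom:
  assumes "\<alpha> \<in> \<I> n" "a \<in> {1..n} - dom \<alpha>" "b \<in> {1..n} - dom \<alpha>" "a \<noteq> b"
  shows "\<alpha> \<in> AI n"
proof -
  have "inj_on (the \<circ> \<alpha>) (dom \<alpha>)"
    using partial_injectionsD(3)[OF assms(1)] by (simp add: inj_on_the_comp_iff)
  moreover have "(the \<circ> \<alpha>) ` dom \<alpha> \<subseteq> {1..n}"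
    using partial_injectionsD(2)[OF assms(1)] by (simp add: ran_eq_image_dom)
  ultimately obtain \<sigma> where "\<sigma> permutes {1..n}" "evenperm \<sigma>" "\<And>x. x \<in> dom \<alpha> \<Longrightarrow> \<sigma> x = the (\<alpha> x)"
    using permutes_even_extension_of_inj_on[of "{1..n}" "dom \<alpha>"] partial_injectionsD(1)[OF assms(1)]
      assms(2-4) by (metis comp_apply finite_atLeastAtMost)
  moreover from this have "\<forall>x\<in>dom \<alpha>. \<alpha> x = Some (\<sigma> x)"
    by (metis domIff option.collapse)
  ultimately show ?thesis
    using assms(1) unfolding AI_def by blast
qed

lemma POI_total_in_AI:
  assumes "\<alpha> \<in> POI n" "dom \<alpha> = {1..n}"
  shows "\<alpha> \<in> AI n"
proof -
  have "\<alpha> \<in> \<I> n"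
    using assms(1) POI_subset by blast
  then have ran: "ran \<alpha> = {1..n}"
    using assms(2) partial_injectionsD(2,5) by (simp add: card_subset_eq)
  have "(the \<circ> \<alpha>) x = id x" if "x \<in> dom \<alpha>" for x
  proof (rule strict_mono_on_eq_if_image_eq[OF _ _ _ _ that])
    show "(the \<circ> \<alpha>) ` dom \<alpha> = id ` dom \<alpha>"
      using ran assms(2) by (simp add: ran_eq_image_dom)
    show "strict_mono_on (dom \<alpha>) (the \<circ> \<alpha>)"
      using assms(1) by (rule POI_strict_mono_on)
    show "strict_mono_on (dom \<alpha>) id"
      by (rule strict_mono_on_id)
  qed (simp add: assms(2))
  then have "\<forall>x\<in>dom \<alpha>. \<alpha> x = Some (id x)"
    by (metis comp_apply domIff option.collapse)
  then show ?thesis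
    using \<open>\<alpha> \<in> \<I> n\<close> permutes_id evenperm_id unfolding AI_def by blast
qed

lemma POI_corank_one_eq_shift_cycle:
  assumes "\<alpha> \<in> POI n" "i \<in> {1..n}" "j \<in> {1..n}" "dom \<alpha> = {1..n} - {i}" "ran \<alpha> = {1..n} - {j}"
    and "x \<in> dom \<alpha>"
  shows "\<alpha> x = Some (shift_cycle i j x)"
proof -
  have "(the \<circ> \<alpha>) x = shift_cycle i j x"
  proof (rule strict_mono_on_eq_if_image_eq[OF _ _ _ _ assms(6)])
    have perm: "shift_cycle i j permutes {1..n}"
      using assms(2,3) by (rule shift_cycle_permutes)
    have "shift_cycle i j ` ({1..n} - {i}) = {1..n} - {j}"
      using permutes_inj[OF perm] permutes_image[OF perm]
      by (simp add: image_set_diff shift_cycle_apply_self)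
    then show "(the \<circ> \<alpha>) ` dom \<alpha> = shift_cycle i j ` dom \<alpha>"
      using assms(4,5) by (simp add: ran_eq_image_dom)
    show "strict_mono_on (dom \<alpha>) (shift_cycle i j)"
      using assms(4) by (auto intro: monotone_on_subset[OF shift_cycle_strict_mono_on])
    show "strict_mono_on (dom \<alpha>) (the \<circ> \<alpha>)"
      using assms(1) by (rule POI_strict_mono_on)
  qed (simp add: assms(4))
  then show ?thesis
    using assms(6) by (metis comp_apply domIff option.collapse)
qed

lemma POI_corank_one_in_AI_iff:
  assumes "\<alpha> \<in> POI n" "i \<in> {1..n}" "j \<in> {1..n}" "dom \<alpha> = {1..n} - {i}" "ran \<alpha> = {1..n} - {j}"
  shows "\<alpha> \<in> AI n \<longleftrightarrow> even (i + j)"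
proof -
  have perm: "shift_cycle i j permutes {1..n}"
    using assms(2,3) by (rule shift_cycle_permutes)
  note agree = POI_corank_one_eq_shift_cycle[OF assms]
  show ?thesis
  proof
    assume "\<alpha> \<in> AI n"
    then obtain \<sigma> where \<sigma>: "\<sigma> permutes {1..n}" "evenperm \<sigma>" "\<forall>x\<in>dom \<alpha>. \<alpha> x = Some (\<sigma> x)"
      by (auto simp: AI_def)
    have "\<sigma> = shift_cycle i j"
    proof (rule bij_eq_if_eq_off_point)
      show "bij \<sigma>" "bij (shift_cycle i j)"
        using \<sigma>(1) perm by (simp_all add: permutes_bij)
      show "\<sigma> x = shift_cycle i j x" if "x \<noteq> i" for x
        using that agree \<sigma>(3) assms(4) permutes_not_in[OF \<sigma>(1)] permutes_not_in[OF perm]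
        by (cases "x \<in> {1..n}") force+
    qed
    then show "even (i + j)"
      using \<sigma>(2) shift_cycle_parity by simp
  next
    assume "even (i + j)"
    then have "evenperm (shift_cycle i j)"
      using shift_cycle_parity by blast
    moreover have "\<alpha> \<in> \<I> n"
      using assms(1) POI_subset by blast
    ultimately show "\<alpha> \<in> AI n"
      using perm agree unfolding AI_def by blast
  qed
qed

lemma partial_injection_dom_ran_cases:
  assumes "\<alpha> \<in> \<I> n"
  obtains "dom \<alpha> = {1..n}"
  | i j where "i \<in> {1..n}" "j \<in> {1..n}" "dom \<alpha> = {1..n} - {i}" "ran \<alpha> = {1..n} - {j}"
  | a b where "a \<in> {1..n} - dom \<alpha>" "b \<in> {1..n} - dom \<alpha>" "a \<noteq> b"
proof -
  let ?gaps = "{1..n} - dom \<alpha>"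
  have dom: "dom \<alpha> \<subseteq> {1..n}" and ran: "ran \<alpha> \<subseteq> {1..n}"
    using partial_injectionsD[OF assms] by simp_all
  have "finite ?gaps"
    by simp
  have gaps_ran: "card ({1..n} - ran \<alpha>) = card ?gaps"
    using dom ran partial_injectionsD(4,5)[OF assms] by (simp add: card_Diff_subset finite_subset)
  consider "card ?gaps = 0" | "card ?gaps = 1" | "\<not> card ?gaps \<le> Suc 0"
    by linarith
  then show thesis
  proof cases
    case 1
    then have "?gaps = {}"
      using \<open>finite ?gaps\<close> by simp
    then show thesis
      using dom that(1) by blast
  next
    case 2
    then obtain i where "?gaps = {i}"
      by (rule card_1_singletonE)
    then have "i \<in> {1..n}" "dom \<alpha> = {1..n} - {i}"
      using dom by auto
    from 2 obtain j where "{1..n} - ran \<alpha> = {j}"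
      using gaps_ran by (metis card_1_singletonE)
    then have "j \<in> {1..n}" "ran \<alpha> = {1..n} - {j}"
      using ran by auto
    then show thesis
      using that(2) \<open>i \<in> {1..n}\<close> \<open>dom \<alpha> = {1..n} - {i}\<close> by blast
  next
    case 3
    then show thesis
      using that(3) card_le_Suc0_iff_eq[OF \<open>finite ?gaps\<close>] by blast
  qed
qed

section \<open>Counting\<close>

lemma card_even_atLeastAtMost: "card {k \<in> {1..n::nat}. even k} = n div 2"
proof (induction n)
  case (Suc n)
  have "{k \<in> {1..Suc n}. even k} =
      (if even (Suc n) then insert (Suc n) else id) {k \<in> {1..n}. even k}"
    by (auto simp: le_Suc_eq)
  then show ?case
    using Suc by auto
qed simp

lemma card_odd_atLeastAtMost: "card {k \<in> {1..n::nat}. odd k} = n - n div 2"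
proof -
  let ?E = "{k \<in> {1..n}. even k}" and ?O = "{k \<in> {1..n}. odd k}"
  have "card ?E + card ?O = card (?E \<union> ?O)"
    by (rule card_Un_disjoint[symmetric]) auto
  also have "?E \<union> ?O = {1..n}"
    by auto
  finally show ?thesis
    using card_even_atLeastAtMost[of n] by simp
qed

lemma card_odd_sum_pairs:
  "card {(i, j). i \<in> {1..n::nat} \<and> j \<in> {1..n} \<and> odd (i + j)} = n * n div 2"
proof -
  let ?E = "{k \<in> {1..n}. even k}" and ?O = "{k \<in> {1..n}. odd k}"
  have "{(i, j). i \<in> {1..n} \<and> j \<in> {1..n} \<and> odd (i + j)} = ?O \<times> ?E \<union> ?E \<times> ?O"
    by auto
  moreover have "(?O \<times> ?E) \<inter> (?E \<times> ?O) = {}"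
    by auto
  ultimately have "card {(i, j). i \<in> {1..n} \<and> j \<in> {1..n} \<and> odd (i + j)} = 2 * card ?O * card ?E"
    by (simp add: card_Un_disjoint card_cartesian_product)
  also have "\<dots> = n * n div 2"
    unfolding card_even_atLeastAtMost card_odd_atLeastAtMost
    by (cases "even n") (auto elim!: evenE oddE simp: algebra_simps)
  finally show ?thesis .
qed

definition odd_corank_one_pairs :: "nat \<Rightarrow> (nat set \<times> nat set) set" where
  "odd_corank_one_pairs n =
     {({1..n} - {i}, {1..n} - {j}) | i j. i \<in> {1..n} \<and> j \<in> {1..n} \<and> odd (i + j)}"

lemma Diff_singleton_injD: "i \<in> S \<Longrightarrow> j \<in> S \<Longrightarrow> S - {i} = S - {j} \<Longrightarrow> i = j"
  by blast

lemma odd_corank_one_pairsD: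
  "(A, B) \<in> odd_corank_one_pairs n \<Longrightarrow> \<exists>i\<in>{1..n}. A = {1..n} - {i}"
  unfolding odd_corank_one_pairs_def by blast

lemma inj_on_diff_singletons:
  "inj_on (\<lambda>(i, j). ({1..n} - {i}, {1..n} - {j})) ({1..n} \<times> {1..n})"
proof -
  have "inj_on (\<lambda>i. {1..n} - {i}) {1..n}"
    by (meson inj_onI Diff_singleton_injD)
  then show ?thesis
    using map_prod_inj_on by (metis map_prod_def)
qed

lemma odd_corank_one_pairs_eq_image:
  "odd_corank_one_pairs n = (\<lambda>(i, j). ({1..n} - {i}, {1..n} - {j})) `
     {(i, j). i \<in> {1..n} \<and> j \<in> {1..n} \<and> odd (i + j)}"
  unfolding odd_corank_one_pairs_def by fast

lemma diff_singletons_in_odd_corank_one_pairs_iff: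
  assumes "i \<in> {1..n}" "j \<in> {1..n}"
  shows "({1..n} - {i}, {1..n} - {j}) \<in> odd_corank_one_pairs n \<longleftrightarrow> odd (i + j)"
proof -
  let ?odd_pairs = "{(i, j). i \<in> {1..n} \<and> j \<in> {1..n} \<and> odd (i + j)}"
  let ?F = "\<lambda>(i, j). ({1..n} - {i}, {1..n} - {j})"
  have "?F (i, j) \<in> ?F ` ?odd_pairs \<longleftrightarrow> (i, j) \<in> ?odd_pairs"
    by (rule inj_on_image_mem_iff[OF inj_on_diff_singletons]) (use assms in auto)
  then show ?thesis
    unfolding odd_corank_one_pairs_eq_image using assms by simp
qed

lemma AO_subset_POI: "AO n \<subseteq> POI n"
  by (simp add: AO_def)

lemma POI_in_AO_iff:
  assumes "\<alpha> \<in> POI n"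
  shows "\<alpha> \<in> AO n \<longleftrightarrow> (dom \<alpha>, ran \<alpha>) \<notin> odd_corank_one_pairs n"
proof -
  have "\<alpha> \<in> \<I> n"
    using assms POI_subset by blast
  then show ?thesis
  proof (cases rule: partial_injection_dom_ran_cases)
    case 1
    then have "\<forall>i\<in>{1..n}. dom \<alpha> \<noteq> {1..n} - {i}"
      by auto
    then have "(dom \<alpha>, ran \<alpha>) \<notin> odd_corank_one_pairs n"
      using odd_corank_one_pairsD by blast
    then show ?thesis
      using POI_total_in_AI[OF assms 1] assms by (simp add: AO_def)
  next
    case (2 i j)
    then show ?thesis
      using POI_corank_one_in_AI_iff[OF assms 2]
        diff_singletons_in_odd_corank_one_pairs_iff[of i n j] assms
      by (simp add: AO_def)
  next
    case (3 a b)
    then have "\<forall>i\<in>{1..n}. dom \<alpha> \<noteq> {1..n} - {i}"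
      by blast
    then have "(dom \<alpha>, ran \<alpha>) \<notin> odd_corank_one_pairs n"
      using odd_corank_one_pairsD by blast
    then show ?thesis
      using partial_injection_in_AI_if_two_points_outside_dom[OF \<open>\<alpha> \<in> \<I> n\<close> 3] assms
      by (simp add: AO_def)
  qed
qed

lemma card_odd_corank_one_pairs: "card (odd_corank_one_pairs n) = n * n div 2"
proof -
  have "inj_on (\<lambda>(i, j). ({1..n} - {i}, {1..n} - {j}))
      {(i, j). i \<in> {1..n} \<and> j \<in> {1..n} \<and> odd (i + j)}"
    by (rule inj_on_subset[OF inj_on_diff_singletons]) blast
  then show ?thesis
    unfolding odd_corank_one_pairs_eq_image by (simp only: card_image card_odd_sum_pairs)
qed

lemma odd_corank_one_pairs_subset: "odd_corank_one_pairs n \<subseteq> equicardinal_subset_pairs {1..n}"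
  by (auto simp: odd_corank_one_pairs_def equicardinal_subset_pairs_def)

lemma bij_betw_restrict_outside:
  assumes "bij_betw f A B"
  shows "bij_betw f {x \<in> A. f x \<notin> C} (B - C)"
proof (rule bij_betw_subset[OF assms])
  show "f ` {x \<in> A. f x \<notin> C} = B - C"
    using bij_betw_imp_surj_on[OF assms] by blast
qed blast

lemma card_AO_add: "card (AO n) + n * n div 2 = (2 * n) choose n"
proof -
  let ?P = "equicardinal_subset_pairs {1..n}" and ?Q = "odd_corank_one_pairs n"
  have "AO n = {\<alpha> \<in> POI n. (dom \<alpha>, ran \<alpha>) \<notin> ?Q}"
    using AO_subset_POI POI_in_AO_iff by blast
  then have "card (AO n) = card (?P - ?Q)"
    using bij_betw_same_card[OF bij_betw_restrict_outside[OF bij_betw_POI_dom_ran]] by simp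
  moreover have "finite ?P"
    by (simp add: finite_equicardinal_subset_pairs)
  moreover have "?Q \<subseteq> ?P"
    by (rule odd_corank_one_pairs_subset)
  ultimately show ?thesis
    using card_mono[of ?P ?Q]
    by (simp add: card_Diff_subset finite_subset card_equicardinal_subset_pairs
        card_odd_corank_one_pairs)
qed

theorem proposition1p2:
  fixes n :: nat
  assumes "n \<ge> 2"
  shows "int (card (AO n)) = int ((2 * n) choose n) - \<lfloor>(real n ^ 2) / 2\<rfloor>"
proof -
  have "\<lfloor>(real n ^ 2) / 2\<rfloor> = int (n * n div 2)"
    using floor_divide_of_nat_eq[of "n * n" 2] by (simp add: power2_eq_square)
  moreover have "int (card (AO n)) + int (n * n div 2) = int ((2 * n) choose n)"
    using card_AO_add by (metis of_nat_add)
  ultimately show ?thesis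
    by linarith
qed

end
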